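(* For any configuration $\mathcal{C}$ of $d$ doors there is a knock sequence $\pi$ such that $\mathbb{T}_{\mathcal{C}}(\pi)\le\mathbb{T}_{\mathcal{C}}(\pi')$ for every knock sequence $\pi'$.
   Context: Dependent doors model. Fix an integer $d\ge 2$ and doors $1,\dots,d$, all initially closed; once a door opens it stays open forever. A configuration $\mathcal{C}$ specifies for each door $i$ a function $\phi_i^{\mathcal{C}}$ mapping every finite nonempty sequence $(X_1,\dots,X_n)$ of subsets of $\{1,\dots,i-1\}$ to $[0,1]$: $\phi_i^{\mathcal{C}}(X_1,\dots,X_n)$ is the probability that door $i$ has opened during $n$ knocks on it, where $X_j$ is the set of open doors among $\{1,\dots,i-1\}$ at the time of the $j$-th knock on door $i$ (so a closed door $i$ opens at its $n$-th knock with conditional probability $(\phi_i(X_1..X_n)-\phi_i(X_1..X_{n-1}))/(1-\phi_i(X_1..X_{n-1}))$, with $\phi_i$ of the empty sequence equal to $0$). Configurations are assumed monotone ($\phi_i(X')\le\phi_i(X)$ whenever $X'$ is a, not necessarily consecutive, subsequence of $X$) and positively correlated ($\phi_i(X'_1,\dots,X'_n)\le\phi_i(X_1,\dots,X_n)$ whenever $X'_j\subseteq X_j$ for all $j$). The fundamental distribution of door $i$ is $p_i(n)=1-\phi_i(\{1,\dots,i-1\}^n)$ ($p_i(0)=1$), and $E_i=\sum_{n\ge0}p_i(n)$ is assumed finite. A knock sequence $\pi$ is an infinite sequence of door indices, executed in order without any feedback; $\mathbb{T}_{\mathcal{C}}(\pi)$ is the expected number of knocks until all $d$ doors are open. *)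

theory Defs
  imports "HOL-Probability.Probability" "HOL-Library.Sublist"
begin

text \<open>A configuration is a function phi with phi i Xs the probability
that door i has opened during length Xs knocks, Xs listing the sets of open doors among
1..i-1 at the times of those knocks.  phi is only meaningful on nonempty lists; the value
on the empty list is fixed to 0 by phi_ext.\<close>

definition phi_ext :: "(nat \<Rightarrow> nat set list \<Rightarrow> real) \<Rightarrow> nat \<Rightarrow> nat set list \<Rightarrow> real" where
  "phi_ext \<phi> i Xs = (if Xs = [] then 0 else \<phi> i Xs)"

definition fund_dist :: "(nat \<Rightarrow> nat set list \<Rightarrow> real) \<Rightarrow> nat \<Rightarrow> nat \<Rightarrow> real" where
  "fund_dist \<phi> i n = 1 - phi_ext \<phi> i (replicate n {1..<i})"

definition door_config :: "nat \<Rightarrow> (nat \<Rightarrow> nat set list \<Rightarrow> real) \<Rightarrow> bool" where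
  "door_config d \<phi> \<longleftrightarrow>
    (\<forall>i\<in>{1..d}.
       (\<forall>Xs. Xs \<noteq> [] \<and> set Xs \<subseteq> Pow {1..<i} \<longrightarrow> 0 \<le> \<phi> i Xs \<and> \<phi> i Xs \<le> 1)
     \<and> (\<forall>Xs Ys. Xs \<noteq> [] \<and> Ys \<noteq> [] \<and> set Xs \<subseteq> Pow {1..<i} \<and> set Ys \<subseteq> Pow {1..<i}
                 \<and> subseq Ys Xs \<longrightarrow> \<phi> i Ys \<le> \<phi> i Xs)
     \<and> (\<forall>Xs Ys. Xs \<noteq> [] \<and> set Xs \<subseteq> Pow {1..<i} \<and> list_all2 (\<subseteq>) Ys Xs
                 \<longrightarrow> \<phi> i Ys \<le> \<phi> i Xs)
     \<and> summable (fund_dist \<phi> i))"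

text \<open>Conditional probability that a closed door i opens at the n-th knock, given the
list Xs = [X_1,...,X_n].\<close>
definition cond_open_prob :: "(nat \<Rightarrow> nat set list \<Rightarrow> real) \<Rightarrow> nat \<Rightarrow> nat set list \<Rightarrow> real" where
  "cond_open_prob \<phi> i Xs =
     (phi_ext \<phi> i Xs - phi_ext \<phi> i (butlast Xs)) / (1 - phi_ext \<phi> i (butlast Xs))"

text \<open>Distribution of the history [S_0, ..., S_t] of sets of open doors after t knocks of
the knock sequence pi (knock number t+1 is on door pi t).\<close>
fun open_hist :: "(nat \<Rightarrow> nat set list \<Rightarrow> real) \<Rightarrow> (nat \<Rightarrow> nat) \<Rightarrow> nat \<Rightarrow> nat set list pmf" where
  "open_hist \<phi> \<pi> 0 = return_pmf [{}]"
| "open_hist \<phi> \<pi> (Suc t) = open_hist \<phi> \<pi> t \<bind> (\<lambda>hs.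
     let S = last hs; i = \<pi> t in
     if i \<in> S then return_pmf (hs @ [S])
     else map_pmf (\<lambda>b. if b then hs @ [insert i S] else hs @ [S])
            (bernoulli_pmf (cond_open_prob \<phi> i
               [hs ! j \<inter> {1..<i}. j \<leftarrow> [0..<Suc t], \<pi> j = i])))"

text \<open>Expected number of knocks until all doors are open: sum over t of the probability
that not all doors are open after t knocks (possibly infinite).\<close>
definition expected_knocks :: "nat \<Rightarrow> (nat \<Rightarrow> nat set list \<Rightarrow> real) \<Rightarrow> (nat \<Rightarrow> nat) \<Rightarrow> ennreal" where
  "expected_knocks d \<phi> \<pi> =
     (\<Sum>t. ennreal (measure_pmf.prob (open_hist \<phi> \<pi> t) {hs. last hs \<noteq> {1..d}}))"

definition knock_seq :: "nat \<Rightarrow> (nat \<Rightarrow> nat) \<Rightarrow> bool" where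
  "knock_seq d \<pi> \<longleftrightarrow> (\<forall>t. \<pi> t \<in> {1..d})"

end

theory Submission imports Defs begin

text \<open>The expected knock count is the series over t of the probability that not all doors are
open after t knocks, and its t-th term depends only on the first t knocks. Over the finite
alphabet 1..d one can therefore choose the knocks one at a time so that the infimum of the
expected knock count over all sequences extending the current prefix never increases. Each
partial sum of the series for the resulting sequence is also a partial sum for some extension of
one of its prefixes, hence bounded by that infimum, which is the global one.\<close>

lemma open_hist_cong_prefix:
  assumes "\<And>j. j < t \<Longrightarrow> \<pi> j = \<sigma> j"
  shows "open_hist \<phi> \<pi> t = open_hist \<phi> \<sigma> t"
  using assms
proof (induction t)
  case (Suc t)
  have knocks_eq: "[f j. j \<leftarrow> [0..<Suc t], \<pi> j = i] = [f j. j \<leftarrow> [0..<Suc t], \<sigma> j = i]"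
    for i and f :: "nat \<Rightarrow> nat set"
    using Suc.prems by (intro arg_cong[where f = concat] map_cong) auto
  show ?case
    using Suc by (simp only: open_hist.simps knocks_eq Suc.prems[of t] lessI less_SucI)
qed simp

definition cylinder :: "'a set \<Rightarrow> nat \<Rightarrow> (nat \<Rightarrow> 'a) \<Rightarrow> (nat \<Rightarrow> 'a) set" where
  "cylinder A n p = {\<pi>. range \<pi> \<subseteq> A \<and> (\<forall>j<n. \<pi> j = p j)}"

lemma cylinder_0 [simp]: "cylinder A 0 p = {\<pi>. range \<pi> \<subseteq> A}"
  by (simp add: cylinder_def)

lemma cylinder_cong: "(\<And>j. j < n \<Longrightarrow> p j = q j) \<Longrightarrow> cylinder A n p = cylinder A n q"
  by (simp add: cylinder_def)

lemma cylinder_Suc_split: "cylinder A n p = (\<Union>c\<in>A. cylinder A (Suc n) (p(n := c)))"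
  by (auto simp: cylinder_def less_Suc_eq)

lemma INF_cylinder_Suc_attained:
  fixes f :: "(nat \<Rightarrow> 'a) \<Rightarrow> 'b :: complete_linorder"
  assumes "finite A" "A \<noteq> {}"
  shows "\<exists>c\<in>A. (INF \<pi>\<in>cylinder A (Suc n) (p(n := c)). f \<pi>) = (INF \<pi>\<in>cylinder A n p. f \<pi>)"
proof -
  define h where "h c = (INF \<pi>\<in>cylinder A (Suc n) (p(n := c)). f \<pi>)" for c
  have "Min (h ` A) \<in> h ` A"
    using assms by simp
  then obtain c where "c \<in> A" "h c = Min (h ` A)"
    by (metis imageE)
  have "(INF \<pi>\<in>cylinder A n p. f \<pi>) = (INF c\<in>A. h c)"
    unfolding cylinder_Suc_split[of A n p] h_def
    by (rule antisym) (auto intro!: INF_greatest INF_superset_mono intro: INF_lower2)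
  also have "\<dots> = h c"
    using assms \<open>h c = Min (h ` A)\<close> by (simp add: Min_Inf)
  finally show ?thesis
    using \<open>c \<in> A\<close> unfolding h_def by auto
qed

lemma greedy_sequence_keeps_INF:
  fixes f :: "(nat \<Rightarrow> 'a) \<Rightarrow> 'b :: complete_linorder"
  assumes "finite A" "A \<noteq> {}"
  obtains \<pi> where "range \<pi> \<subseteq> A"
    and "\<And>n. (INF \<sigma>\<in>cylinder A n \<pi>. f \<sigma>) = (INF \<sigma>\<in>{\<sigma>. range \<sigma> \<subseteq> A}. f \<sigma>)"
proof -
  define I where "I = (INF \<sigma>\<in>{\<sigma>. range \<sigma> \<subseteq> A}. f \<sigma>)"
  have "\<exists>q. \<forall>n. (INF \<sigma>\<in>cylinder A n (q n). f \<sigma>) = I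
                \<and> q (Suc n) = (q n)(n := q (Suc n) n) \<and> q (Suc n) n \<in> A"
  proof (rule dependent_nat_choice)
    show "\<exists>p. (INF \<sigma>\<in>cylinder A 0 p. f \<sigma>) = I"
      by (simp add: I_def)
  next
    fix p n assume "(INF \<sigma>\<in>cylinder A n p. f \<sigma>) = I"
    moreover obtain c where "c \<in> A"
      and "(INF \<sigma>\<in>cylinder A (Suc n) (p(n := c)). f \<sigma>) = (INF \<sigma>\<in>cylinder A n p. f \<sigma>)"
      using INF_cylinder_Suc_attained[OF assms, of f n p] by blast
    ultimately show "\<exists>p'. (INF \<sigma>\<in>cylinder A (Suc n) p'. f \<sigma>) = I \<and> p' = p(n := p' n) \<and> p' n \<in> A"
      by (intro exI[of _ "p(n := c)"]) simp
  qed
  then obtain q where INF_q: "\<And>n. (INF \<sigma>\<in>cylinder A n (q n). f \<sigma>) = I"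
    and q_Suc: "\<And>n. q (Suc n) = (q n)(n := q (Suc n) n)"
    and q_in: "\<And>n. q (Suc n) n \<in> A"
    by blast
  define \<pi> where "\<pi> n = q (Suc n) n" for n
  have q_stable: "q (n + k) j = q n j" if "j < n" for n k j
    using that
  proof (induction k)
    case (Suc k)
    then show ?case
      by (subst add_Suc_right, subst q_Suc) simp
  qed simp
  have "\<pi> j = q n j" if "j < n" for j n
    using q_stable[of j "Suc j" "n - Suc j"] that by (simp add: \<pi>_def)
  then have "cylinder A n \<pi> = cylinder A n (q n)" for n
    by (rule cylinder_cong)
  moreover have "range \<pi> \<subseteq> A"
    using q_in by (auto simp: \<pi>_def)
  ultimately show ?thesis
    using that INF_q by (simp add: I_def)
qed

lemma suminf_prefix_determined_attains_min:
  fixes g :: "(nat \<Rightarrow> 'a) \<Rightarrow> nat \<Rightarrow> ennreal"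
  assumes "finite A" "A \<noteq> {}"
    and prefix_determined: "\<And>\<pi> \<sigma> t. (\<And>j. j < t \<Longrightarrow> \<pi> j = \<sigma> j) \<Longrightarrow> g \<pi> t = g \<sigma> t"
  shows "\<exists>\<pi>. range \<pi> \<subseteq> A \<and> (\<forall>\<sigma>. range \<sigma> \<subseteq> A \<longrightarrow> (\<Sum>t. g \<pi> t) \<le> (\<Sum>t. g \<sigma> t))"
proof -
  define I where "I = (INF \<sigma>\<in>{\<sigma>. range \<sigma> \<subseteq> A}. \<Sum>t. g \<sigma> t)"
  obtain \<pi> where range_\<pi>: "range \<pi> \<subseteq> A"
    and INF_cylinder: "\<And>n. (INF \<sigma>\<in>cylinder A n \<pi>. \<Sum>t. g \<sigma> t) = I"
    using greedy_sequence_keeps_INF[OF assms(1,2)] unfolding I_def by blast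
  have "(\<Sum>t<N. g \<pi> t) \<le> I" for N
  proof -
    have "(\<Sum>t<N. g \<pi> t) \<le> (\<Sum>t. g \<sigma> t)" if "\<sigma> \<in> cylinder A N \<pi>" for \<sigma>
    proof -
      have "(\<Sum>t<N. g \<pi> t) = (\<Sum>t<N. g \<sigma> t)"
        using that by (intro sum.cong refl prefix_determined) (auto simp: cylinder_def)
      also have "\<dots> \<le> (\<Sum>t. g \<sigma> t)"
        by (rule sum_le_suminf) auto
      finally show ?thesis .
    qed
    then show ?thesis
      using INF_cylinder[of N] by (metis INF_greatest)
  qed
  then have "(\<Sum>t. g \<pi> t) \<le> I"
    unfolding suminf_eq_SUP by (rule SUP_least)
  moreover have "I \<le> (\<Sum>t. g \<sigma> t)" if "range \<sigma> \<subseteq> A" for \<sigma>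
    unfolding I_def using that by (auto intro: INF_lower)
  ultimately show ?thesis
    using range_\<pi> by (meson order_trans)
qed

theorem mainTheorem8:
  fixes d :: nat and \<phi> :: "nat \<Rightarrow> nat set list \<Rightarrow> real"
  assumes "d \<ge> 2" and "door_config d \<phi>"
  shows "\<exists>\<pi>. knock_seq d \<pi> \<and>
           (\<forall>\<pi>'. knock_seq d \<pi>' \<longrightarrow> expected_knocks d \<phi> \<pi> \<le> expected_knocks d \<phi> \<pi>')"
proof -
  define g where "g \<pi> t = ennreal (measure_pmf.prob (open_hist \<phi> \<pi> t) {hs. last hs \<noteq> {1..d}})"
    for \<pi> t
  have prefix_determined: "g \<pi> t = g \<sigma> t" if "\<And>j. j < t \<Longrightarrow> \<pi> j = \<sigma> j" for \<pi> \<sigma> t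
    unfolding g_def by (simp only: open_hist_cong_prefix[OF that])
  have "{1..d} \<noteq> {}"
    using assms(1) by simp
  from suminf_prefix_determined_attains_min[where g = g, OF finite_atLeastAtMost this prefix_determined]
  obtain \<pi> where "range \<pi> \<subseteq> {1..d}"
    and "\<forall>\<sigma>. range \<sigma> \<subseteq> {1..d} \<longrightarrow> (\<Sum>t. g \<pi> t) \<le> (\<Sum>t. g \<sigma> t)"
    by blast
  moreover have "knock_seq d \<sigma> \<longleftrightarrow> range \<sigma> \<subseteq> {1..d}" for \<sigma>
    by (auto simp: knock_seq_def image_subset_iff)
  moreover have "expected_knocks d \<phi> \<sigma> = (\<Sum>t. g \<sigma> t)" for \<sigma>
    by (simp add: expected_knocks_def g_def)
  ultimately show ?thesis
    by auto
qed

end
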